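(* Let $(X_1,d_1)$, $(X_2,d_2)$ be proper CAT(0) spaces, let $\Gamma$ be an infinite group acting convex co-compactly by isometries on $X_1$ and on $X_2$ via homomorphisms $\rho_i:\Gamma\to\mathrm{Isom}(X_i)$, and suppose the diagonal action $\rho=(\rho_1,\rho_2)$ of $\Gamma$ on $X_1\times X_2$ is convex co-compact, with $C\subset X_1\times X_2$ a nonempty $\rho(\Gamma)$-invariant convex subset such that $C/\rho(\Gamma)$ is compact. Fix $x=(x_1,x_2)\in C$, and for $i=1,2$ let $l_i$ be a complete geodesic line in $X_i$ through $x_i$. Let $F=l_1\times l_2$ (a flat isometric to the Euclidean plane) and $C_F=F\cap C$. If $C_F$ has infinite diameter, then $C_F$ lies within finite Hausdorff distance of a geodesic ray or of a complete geodesic line in $F$.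
   Context: $X_1\times X_2$ carries the product metric $\sqrt{d_1^2+d_2^2}$. A properly discontinuous isometric action on a proper CAT(0) space $X$ is convex co-compact if there is a nonempty closed invariant convex subset with compact quotient. *)

theory Defs
  imports "HOL-Analysis.Analysis" "HOL-Algebra.Group"
begin

text \<open>A metric space is modelled by a type of class metric_space (the whole type is the space).
  On a product type the library metric is dist = sqrt (d1^2 + d2^2).\<close>

definition geodesic_path :: "'a::metric_space \<Rightarrow> 'a \<Rightarrow> (real \<Rightarrow> 'a) \<Rightarrow> bool" where
  "geodesic_path x y c \<longleftrightarrow> c 0 = x \<and> c 1 = y \<and>
     (\<forall>s\<in>{0..1}. \<forall>t\<in>{0..1}. dist (c s) (c t) = \<bar>s - t\<bar> * dist x y)"

definition geodesic_space :: "'a::metric_space itself \<Rightarrow> bool" where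
  "geodesic_space _ \<longleftrightarrow> (\<forall>x y::'a. \<exists>c. geodesic_path x y c)"

text \<open>Points of a side of a geodesic triangle paired with their comparison points in the Euclidean plane.\<close>
definition side_pairs :: "(real \<Rightarrow> 'a) \<Rightarrow> complex \<Rightarrow> complex \<Rightarrow> ('a \<times> complex) set" where
  "side_pairs c x' y' = {(c t, x' + of_real t * (y' - x')) | t. t \<in> {0..1}}"

definition CAT0 :: "'a::metric_space itself \<Rightarrow> bool" where
  "CAT0 T \<longleftrightarrow> geodesic_space T \<and>
    (\<forall>(x::'a) y z c1 c2 c3 x' y' z'.
       geodesic_path x y c1 \<and> geodesic_path y z c2 \<and> geodesic_path z x c3 \<and>
       dist x' y' = dist x y \<and> dist y' z' = dist y z \<and> dist z' x' = dist z x \<longrightarrow>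
       (\<forall>(p, p') \<in> side_pairs c1 x' y' \<union> side_pairs c2 y' z' \<union> side_pairs c3 z' x'.
        \<forall>(q, q') \<in> side_pairs c1 x' y' \<union> side_pairs c2 y' z' \<union> side_pairs c3 z' x'.
          dist p q \<le> dist p' q'))"

definition proper_space :: "'a::metric_space itself \<Rightarrow> bool" where
  "proper_space _ \<longleftrightarrow> (\<forall>(x::'a) r. compact (cball x r))"

definition isometry :: "('a::metric_space \<Rightarrow> 'a) \<Rightarrow> bool" where
  "isometry f \<longleftrightarrow> bij f \<and> (\<forall>x y. dist (f x) (f y) = dist x y)"

definition isometric_action :: "('g, 'm) monoid_scheme \<Rightarrow> ('g \<Rightarrow> 'a::metric_space \<Rightarrow> 'a) \<Rightarrow> bool" where
  "isometric_action G \<rho> \<longleftrightarrow> group G \<and>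
     (\<forall>g\<in>carrier G. isometry (\<rho> g)) \<and>
     (\<forall>g\<in>carrier G. \<forall>h\<in>carrier G. \<rho> (g \<otimes>\<^bsub>G\<^esub> h) = \<rho> g \<circ> \<rho> h) \<and>
     \<rho> \<one>\<^bsub>G\<^esub> = id"

definition properly_discontinuous :: "('g, 'm) monoid_scheme \<Rightarrow> ('g \<Rightarrow> 'a::metric_space \<Rightarrow> 'a) \<Rightarrow> bool" where
  "properly_discontinuous G \<rho> \<longleftrightarrow>
     (\<forall>K. compact K \<longrightarrow> finite {g \<in> carrier G. \<rho> g ` K \<inter> K \<noteq> {}})"

definition convex_in :: "'a::metric_space set \<Rightarrow> bool" where
  "convex_in C \<longleftrightarrow> (\<forall>x\<in>C. \<forall>y\<in>C. \<forall>c. geodesic_path x y c \<longrightarrow> c ` {0..1} \<subseteq> C)"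

definition invariant_set :: "('g, 'm) monoid_scheme \<Rightarrow> ('g \<Rightarrow> 'a \<Rightarrow> 'a) \<Rightarrow> 'a set \<Rightarrow> bool" where
  "invariant_set G \<rho> C \<longleftrightarrow> (\<forall>g\<in>carrier G. \<rho> g ` C \<subseteq> C)"

text \<open>C / rho(G) is compact in the quotient topology: open sets of the orbit space correspond
  exactly to G-invariant relatively open subsets of C, so compactness of the quotient means every
  cover of C by invariant relatively open sets has a finite subcover.\<close>
definition compact_quotient :: "('g, 'm) monoid_scheme \<Rightarrow> ('g \<Rightarrow> 'a::metric_space \<Rightarrow> 'a) \<Rightarrow> 'a set \<Rightarrow> bool" where
  "compact_quotient G \<rho> C \<longleftrightarrow>
     (\<forall>\<U>. (\<forall>U\<in>\<U>. openin (top_of_set C) U \<and> invariant_set G \<rho> U) \<and> C \<subseteq> \<Union>\<U> \<longrightarrow>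
        (\<exists>\<F>\<subseteq>\<U>. finite \<F> \<and> C \<subseteq> \<Union>\<F>))"

definition convex_cocompact_witness :: "('g, 'm) monoid_scheme \<Rightarrow> ('g \<Rightarrow> 'a::metric_space \<Rightarrow> 'a) \<Rightarrow> 'a set \<Rightarrow> bool" where
  "convex_cocompact_witness G \<rho> C \<longleftrightarrow>
     C \<noteq> {} \<and> closed C \<and> convex_in C \<and> invariant_set G \<rho> C \<and> compact_quotient G \<rho> C"

definition convex_cocompact :: "('g, 'm) monoid_scheme \<Rightarrow> ('g \<Rightarrow> 'a::metric_space \<Rightarrow> 'a) \<Rightarrow> bool" where
  "convex_cocompact G \<rho> \<longleftrightarrow> isometric_action G \<rho> \<and> properly_discontinuous G \<rho> \<and>
     (\<exists>C. convex_cocompact_witness G \<rho> C)"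

definition diagonal_action :: "('g \<Rightarrow> 'a \<Rightarrow> 'a) \<Rightarrow> ('g \<Rightarrow> 'b \<Rightarrow> 'b) \<Rightarrow> 'g \<Rightarrow> 'a \<times> 'b \<Rightarrow> 'a \<times> 'b" where
  "diagonal_action \<rho>1 \<rho>2 g p = (\<rho>1 g (fst p), \<rho>2 g (snd p))"

definition geodesic_line :: "(real \<Rightarrow> 'a::metric_space) \<Rightarrow> bool" where
  "geodesic_line l \<longleftrightarrow> (\<forall>s t. dist (l s) (l t) = \<bar>s - t\<bar>)"

definition geodesic_ray :: "(real \<Rightarrow> 'a::metric_space) \<Rightarrow> bool" where
  "geodesic_ray r \<longleftrightarrow> (\<forall>s\<ge>0. \<forall>t\<ge>0. dist (r s) (r t) = \<bar>s - t\<bar>)"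

definition finite_hausdorff_dist :: "'a::metric_space set \<Rightarrow> 'a set \<Rightarrow> bool" where
  "finite_hausdorff_dist A B \<longleftrightarrow> (\<exists>R. (\<forall>a\<in>A. \<exists>b\<in>B. dist a b \<le> R) \<and> (\<forall>b\<in>B. \<exists>a\<in>A. dist a b \<le> R))"

end

theory Submission
  imports Defs
begin

(* Pull C back along the isometric embedding (a, b) \<mapsto> (l1 a, l2 b) of the Euclidean plane
   onto the flat F; this gives a closed convex unbounded planar set S.  Cocompactness puts every
   point of C within a fixed distance of the orbit of (x1, x2), and proper discontinuity of each
   factor action then bounds the fibres of C over either factor uniformly, so S meets horizontal
   and vertical lines in uniformly bounded sets.  An unbounded closed convex set has a direction of
   recession u; sliding points along u until they share a coordinate shows that S lies in a strip
   around a line parallel to u.  Projecting onto that line, S is at finite Hausdorff distance from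
   the image of an up-closed set of reals, that is, from a ray or from the whole line. *)

section \<open>Sets at finite Hausdorff distance from a ray or a line\<close>

lemma finite_hausdorff_dist_trans:
  assumes "finite_hausdorff_dist A B" and "finite_hausdorff_dist B C"
  shows "finite_hausdorff_dist A C"
proof -
  obtain R where R: "\<forall>a\<in>A. \<exists>b\<in>B. dist a b \<le> R" "\<forall>b\<in>B. \<exists>a\<in>A. dist a b \<le> R"
    using assms(1) unfolding finite_hausdorff_dist_def by blast
  obtain R' where R': "\<forall>b\<in>B. \<exists>c\<in>C. dist b c \<le> R'" "\<forall>c\<in>C. \<exists>b\<in>B. dist b c \<le> R'"
    using assms(2) unfolding finite_hausdorff_dist_def by blast
  have "\<forall>a\<in>A. \<exists>c\<in>C. dist a c \<le> R + R'"
    using R(1) R'(1) by (meson add_mono dist_triangle order_trans)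
  moreover have "\<forall>c\<in>C. \<exists>a\<in>A. dist a c \<le> R + R'"
    using R(2) R'(2) by (meson add_mono dist_triangle order_trans)
  ultimately show ?thesis
    unfolding finite_hausdorff_dist_def by blast
qed

lemma finite_hausdorff_dist_image:
  assumes "finite_hausdorff_dist A B" and "\<And>x y. dist (f x) (f y) \<le> dist x y"
  shows "finite_hausdorff_dist (f ` A) (f ` B)"
proof -
  obtain R where R: "\<forall>a\<in>A. \<exists>b\<in>B. dist a b \<le> R" "\<forall>b\<in>B. \<exists>a\<in>A. dist a b \<le> R"
    using assms(1) unfolding finite_hausdorff_dist_def by blast
  then have "\<forall>a\<in>A. \<exists>b\<in>B. dist (f a) (f b) \<le> R" "\<forall>b\<in>B. \<exists>a\<in>A. dist (f a) (f b) \<le> R"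
    using assms(2) order_trans by meson+
  then show ?thesis
    unfolding finite_hausdorff_dist_def by blast
qed

lemma finite_hausdorff_dist_Inf_atLeast:
  fixes I :: "real set"
  assumes "I \<noteq> {}" and "bdd_below I" and up: "\<And>s t. s \<in> I \<Longrightarrow> s \<le> t \<Longrightarrow> t \<in> I"
  shows "finite_hausdorff_dist I {Inf I..}"
  unfolding finite_hausdorff_dist_def
proof (intro exI[of _ 1] conjI ballI)
  fix s assume "s \<in> I"
  then show "\<exists>t\<in>{Inf I..}. dist s t \<le> 1"
    using cInf_lower[OF _ assms(2)] by force
next
  fix t assume "t \<in> {Inf I..}"
  then obtain s where s: "s \<in> I" "s < t + 1"
    using cInf_less_iff[OF assms(1,2), of "t + 1"] by auto
  show "\<exists>s\<in>I. dist s t \<le> 1"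
  proof (cases "s \<le> t")
    case True
    then show ?thesis using up[OF s(1)] by force
  next
    case False
    then show ?thesis using s by (auto simp: dist_real_def intro!: bexI[of _ s])
  qed
qed

lemma geodesic_line_affine:
  fixes u :: "'v::real_normed_vector"
  assumes "norm u = 1"
  shows "geodesic_line (\<lambda>\<sigma>. x0 + \<sigma> *\<^sub>R u)"
  unfolding geodesic_line_def dist_norm
  by (simp add: assms flip: scaleR_diff_left)

definition near_ray_or_line_in :: "'a::metric_space set \<Rightarrow> 'a set \<Rightarrow> bool" where
  "near_ray_or_line_in F S \<longleftrightarrow>
     (\<exists>r. geodesic_ray r \<and> r ` {0..} \<subseteq> F \<and> finite_hausdorff_dist S (r ` {0..})) \<or>
     (\<exists>\<gamma>. geodesic_line \<gamma> \<and> range \<gamma> \<subseteq> F \<and> finite_hausdorff_dist S (range \<gamma>))"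

lemma near_line_imp_near_ray_or_line:
  fixes S :: "'v::real_inner set"
  assumes "S \<noteq> {}" and "norm u = 1"
    and recession: "\<And>p t. p \<in> S \<Longrightarrow> 0 \<le> t \<Longrightarrow> p + t *\<^sub>R u \<in> S"
    and near: "\<And>p. p \<in> S \<Longrightarrow> dist p (x0 + ((p - x0) \<bullet> u) *\<^sub>R u) \<le> M"
  shows "near_ray_or_line_in UNIV S"
proof -
  define \<gamma> where "\<gamma> \<sigma> = x0 + \<sigma> *\<^sub>R u" for \<sigma>
  define I where "I = (\<lambda>p. (p - x0) \<bullet> u) ` S"
  have line: "geodesic_line \<gamma>"
    unfolding \<gamma>_def by (rule geodesic_line_affine[OF \<open>norm u = 1\<close>])
  then have short: "dist (\<gamma> s) (\<gamma> t) \<le> dist s t" for s t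
    by (simp add: geodesic_line_def dist_real_def)
  have near_I: "finite_hausdorff_dist S (\<gamma> ` I)"
    unfolding finite_hausdorff_dist_def I_def \<gamma>_def
    using near by (metis (no_types, lifting) dist_commute image_iff)
  have "u \<bullet> u = 1"
    using \<open>norm u = 1\<close> by (simp add: norm_eq_1)
  then have up: "t \<in> I" if "s \<in> I" "s \<le> t" for s t
  proof -
    obtain p where p: "p \<in> S" "s = (p - x0) \<bullet> u"
      using \<open>s \<in> I\<close> unfolding I_def by blast
    have "p + (t - s) *\<^sub>R u \<in> S"
      using recession[OF p(1)] \<open>s \<le> t\<close> by simp
    moreover have "(p + (t - s) *\<^sub>R u - x0) \<bullet> u = t"
      using p(2) \<open>u \<bullet> u = 1\<close> by (simp add: algebra_simps)
    ultimately show "t \<in> I"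
      unfolding I_def by (metis image_eqI)
  qed
  show ?thesis
  proof (cases "bdd_below I")
    case True
    define r where "r = (\<lambda>t. \<gamma> (Inf I + t))"
    have "geodesic_ray r"
      using line by (simp add: geodesic_line_def geodesic_ray_def r_def)
    have "r ` {0..} = \<gamma> ` (plus (Inf I) ` {0..})"
      unfolding r_def image_comp by (simp add: comp_def)
    then have r_image: "r ` {0..} = \<gamma> ` {Inf I..}"
      by simp
    have "I \<noteq> {}"
      using \<open>S \<noteq> {}\<close> unfolding I_def by blast
    then have "finite_hausdorff_dist (\<gamma> ` I) (r ` {0..})"
      unfolding r_image
      using finite_hausdorff_dist_image[OF finite_hausdorff_dist_Inf_atLeast short] True up
      by blast
    then have "finite_hausdorff_dist S (r ` {0..})"
      by (rule finite_hausdorff_dist_trans[OF near_I])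
    with \<open>geodesic_ray r\<close> show ?thesis
      unfolding near_ray_or_line_in_def by blast
  next
    case False
    then have "I = UNIV"
      using up by (auto simp: bdd_below_def) (meson linear)
    then show ?thesis
      using line near_I unfolding near_ray_or_line_in_def by auto
  qed
qed

section \<open>Unbounded closed convex sets with bounded coordinate fibres\<close>

lemma dist_line_projection_le:
  fixes u :: "'v::real_inner"
  assumes "norm u = 1"
  shows "dist p (x0 + ((p - x0) \<bullet> u) *\<^sub>R u) \<le> dist p (x0 + c *\<^sub>R u)"
proof -
  define d where "d = p - x0"
  have "u \<bullet> u = 1"
    using assms by (simp add: norm_eq_1)
  then have "(d - c *\<^sub>R u) \<bullet> (d - c *\<^sub>R u) =
      (d - (d \<bullet> u) *\<^sub>R u) \<bullet> (d - (d \<bullet> u) *\<^sub>R u) + (d \<bullet> u - c)\<^sup>2"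
    by (simp add: inner_commute power2_eq_square algebra_simps)
  then have "norm (d - (d \<bullet> u) *\<^sub>R u) \<le> norm (d - c *\<^sub>R u)"
    unfolding norm_le by simp
  then show ?thesis
    by (simp add: d_def dist_norm diff_diff_eq)
qed

lemma bounded_coordinate_fibres_imp_near_line:
  fixes S :: "'v::euclidean_space set"
  assumes "norm u = 1" and "x0 \<in> S"
    and recession: "\<And>p t. p \<in> S \<Longrightarrow> 0 \<le> t \<Longrightarrow> p + t *\<^sub>R u \<in> S"
    and fibres: "\<And>p q i. p \<in> S \<Longrightarrow> q \<in> S \<Longrightarrow> i \<in> Basis \<Longrightarrow> p \<bullet> i = q \<bullet> i \<Longrightarrow> dist p q \<le> M"
    and "p \<in> S"
  shows "dist p (x0 + ((p - x0) \<bullet> u) *\<^sub>R u) \<le> M"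
proof -
  obtain i where i: "i \<in> Basis" "u \<bullet> i \<noteq> 0"
    using \<open>norm u = 1\<close> euclidean_all_zero_iff[of u] by auto
  define c where "c = ((p - x0) \<bullet> i) / (u \<bullet> i)"
  \<comment> \<open>Slide p and x0 along u until they share the i-th coordinate.\<close>
  have "c * (u \<bullet> i) = (p - x0) \<bullet> i"
    using i(2) by (simp add: c_def)
  then have "(p + \<bar>c\<bar> *\<^sub>R u) \<bullet> i = (x0 + (\<bar>c\<bar> + c) *\<^sub>R u) \<bullet> i"
    by (simp add: algebra_simps)
  then have "dist (p + \<bar>c\<bar> *\<^sub>R u) (x0 + (\<bar>c\<bar> + c) *\<^sub>R u) \<le> M"
    using fibres recession \<open>p \<in> S\<close> \<open>x0 \<in> S\<close> i(1) by simp
  moreover have "dist (p + \<bar>c\<bar> *\<^sub>R u) (x0 + (\<bar>c\<bar> + c) *\<^sub>R u) = dist p (x0 + c *\<^sub>R u)"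
    by (simp add: dist_norm algebra_simps)
  ultimately show ?thesis
    using dist_line_projection_le[OF \<open>norm u = 1\<close>, of p x0 c] by linarith
qed

lemma closed_convex_recession_limit_direction:
  fixes S :: "'v::real_normed_vector set"
  assumes "closed S" and "convex S" and "\<And>n. y n \<in> S"
    and to_infinity: "filterlim (\<lambda>n. norm (y n - x0)) at_top sequentially"
    and direction: "(\<lambda>n. sgn (y n - x0)) \<longlonglongrightarrow> u"
    and "p \<in> S" and "0 \<le> t"
  shows "p + t *\<^sub>R u \<in> S"
proof -
  define w where "w n = t / norm (y n - x0)" for n
  have "w \<longlonglongrightarrow> 0"
    unfolding w_def by (rule tendsto_divide_0[OF tendsto_const filterlim_at_top_imp_at_infinity[OF to_infinity]])
  have "eventually (\<lambda>n. max 1 t \<le> norm (y n - x0)) sequentially"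
    using to_infinity unfolding filterlim_at_top by blast
  then have "eventually (\<lambda>n. p + t *\<^sub>R sgn (y n - x0) + w n *\<^sub>R (x0 - p) \<in> S) sequentially"
  proof eventually_elim
    case (elim n)
    then have "(1 - w n) *\<^sub>R p + w n *\<^sub>R y n \<in> S"
      using \<open>convex S\<close> \<open>p \<in> S\<close> \<open>y n \<in> S\<close> \<open>0 \<le> t\<close>
      by (intro convexD_alt) (auto simp: w_def divide_le_eq_1)
    moreover have "(1 - w n) *\<^sub>R p + w n *\<^sub>R y n = p + t *\<^sub>R sgn (y n - x0) + w n *\<^sub>R (x0 - p)"
      using elim by (simp add: w_def sgn_div_norm algebra_simps divide_inverse)
    ultimately show ?case
      by simp
  qed
  moreover have "(\<lambda>n. p + t *\<^sub>R sgn (y n - x0) + w n *\<^sub>R (x0 - p)) \<longlonglongrightarrow> p + t *\<^sub>R u + 0 *\<^sub>R (x0 - p)"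
    by (intro tendsto_intros direction \<open>w \<longlonglongrightarrow> 0\<close>)
  ultimately show ?thesis
    using Lim_in_closed_set[OF \<open>closed S\<close> _ trivial_limit_sequentially] by fastforce
qed

lemma unbounded_closed_convex_recession_direction:
  fixes S :: "'v::euclidean_space set"
  assumes "closed S" and "convex S" and "\<not> bounded S"
  obtains u where "norm u = 1" and "\<And>p t. p \<in> S \<Longrightarrow> 0 \<le> t \<Longrightarrow> p + t *\<^sub>R u \<in> S"
proof -
  obtain x0 where "x0 \<in> S"
    using \<open>\<not> bounded S\<close> by fastforce
  have "\<exists>y\<in>S. real n < norm (y - x0)" for n
    using \<open>\<not> bounded S\<close> unfolding bounded_any_center[of S x0]
    by (metis dist_norm dist_commute not_le)
  then obtain y where y: "\<And>n. y n \<in> S" "\<And>n. real n < norm (y n - x0)"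
    by metis
  have "0 < norm (y n - x0)" for n
    using y(2)[of n] of_nat_0_le_iff[of n] by linarith
  then have "\<forall>n. sgn (y n - x0) \<in> sphere 0 1"
    by (simp add: norm_sgn)
  from seq_compactE[OF compact_imp_seq_compact[OF compact_sphere] this]
  obtain u r where u: "u \<in> sphere 0 1" and "strict_mono r"
    and "((\<lambda>n. sgn (y n - x0)) \<circ> r) \<longlonglongrightarrow> u" .
  then have direction: "(\<lambda>n. sgn (y (r n) - x0)) \<longlonglongrightarrow> u"
    by (simp add: comp_def)
  have "filterlim (\<lambda>n. norm (y (r n) - x0)) at_top sequentially"
  proof (rule filterlim_at_top_mono[OF filterlim_real_sequentially always_eventually], rule allI)
    fix n
    have "real n \<le> real (r n)"
      using seq_suble[OF \<open>strict_mono r\<close>] by simp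
    then show "real n \<le> norm (y (r n) - x0)"
      using y(2)[of "r n"] by linarith
  qed
  then have "p + t *\<^sub>R u \<in> S" if "p \<in> S" "0 \<le> t" for p t
    using closed_convex_recession_limit_direction[OF assms(1,2) y(1) _ direction that] by blast
  with u show ?thesis
    using that by simp
qed

lemma closed_convex_unbounded_near_ray_or_line:
  fixes S :: "'v::euclidean_space set"
  assumes "closed S" and "convex S" and "\<not> bounded S"
    and fibres: "\<And>p q i. p \<in> S \<Longrightarrow> q \<in> S \<Longrightarrow> i \<in> Basis \<Longrightarrow> p \<bullet> i = q \<bullet> i \<Longrightarrow> dist p q \<le> M"
  shows "near_ray_or_line_in UNIV S"
proof -
  obtain u where u: "norm u = 1" and recession: "\<And>p t. p \<in> S \<Longrightarrow> 0 \<le> t \<Longrightarrow> p + t *\<^sub>R u \<in> S"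
    using unbounded_closed_convex_recession_direction[OF assms(1-3)] by blast
  obtain x0 where "x0 \<in> S"
    using \<open>\<not> bounded S\<close> by fastforce
  have "dist p (x0 + ((p - x0) \<bullet> u) *\<^sub>R u) \<le> M" if "p \<in> S" for p
    using bounded_coordinate_fibres_imp_near_line[of u x0 S M p] u \<open>x0 \<in> S\<close> recession fibres that
    by blast
  then show ?thesis
    using near_line_imp_near_ray_or_line[of S u x0 M] u recession \<open>x0 \<in> S\<close> by blast
qed

section \<open>Fibres of cocompact diagonal actions\<close>

lemma isometric_actionD:
  assumes "isometric_action G \<rho>"
  shows "group G"
    and "g \<in> carrier G \<Longrightarrow> dist (\<rho> g p) (\<rho> g q) = dist p q"
    and "g \<in> carrier G \<Longrightarrow> h \<in> carrier G \<Longrightarrow> \<rho> (g \<otimes>\<^bsub>G\<^esub> h) y = \<rho> g (\<rho> h y)"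
    and "\<rho> \<one>\<^bsub>G\<^esub> y = y"
  using assms unfolding isometric_action_def isometry_def by auto

lemma invariant_set_orbit_neighbourhood:
  assumes act: "isometric_action G \<rho>" and "invariant_set G \<rho> C"
  shows "invariant_set G \<rho> {c \<in> C. \<exists>g\<in>carrier G. dist c (\<rho> g x) < r}"
  unfolding invariant_set_def
proof (intro ballI subsetI)
  interpret group G
    by (rule isometric_actionD(1)[OF act])
  fix h y
  assume h: "h \<in> carrier G" and "y \<in> \<rho> h ` {c \<in> C. \<exists>g\<in>carrier G. dist c (\<rho> g x) < r}"
  then obtain c g where c: "c \<in> C" "g \<in> carrier G" "dist c (\<rho> g x) < r" "y = \<rho> h c"
    by auto
  have "y \<in> C"
    using \<open>invariant_set G \<rho> C\<close> h c unfolding invariant_set_def by auto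
  moreover have "dist y (\<rho> (h \<otimes>\<^bsub>G\<^esub> g) x) < r"
    using c h isometric_actionD(2,3)[OF act] by simp
  ultimately show "y \<in> {c \<in> C. \<exists>g\<in>carrier G. dist c (\<rho> g x) < r}"
    using h c(2) by blast
qed

lemma compact_quotient_orbit_cover:
  assumes act: "isometric_action G \<rho>" and "invariant_set G \<rho> C" and "compact_quotient G \<rho> C"
    and "x \<in> C"
  obtains D where "\<And>c. c \<in> C \<Longrightarrow> \<exists>g\<in>carrier G. dist c (\<rho> g x) < D"
proof -
  interpret group G
    by (rule isometric_actionD(1)[OF act])
  define U where "U n = {c \<in> C. \<exists>g\<in>carrier G. dist c (\<rho> g x) < real n}" for n
  have "U n = C \<inter> (\<Union>g\<in>carrier G. ball (\<rho> g x) (real n))" for n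
    by (auto simp: U_def dist_commute)
  then have "openin (top_of_set C) (U n)" for n
    by auto
  moreover have "invariant_set G \<rho> (U n)" for n
    unfolding U_def by (rule invariant_set_orbit_neighbourhood[OF act \<open>invariant_set G \<rho> C\<close>])
  moreover have "C \<subseteq> \<Union>(range U)"
  proof
    fix c assume "c \<in> C"
    obtain n where "dist c x < real n"
      using reals_Archimedean2 by blast
    then have "c \<in> U n"
      unfolding U_def using \<open>c \<in> C\<close> isometric_actionD(4)[OF act]
      by (auto intro!: bexI[of _ "\<one>\<^bsub>G\<^esub>"])
    then show "c \<in> \<Union>(range U)"
      by blast
  qed
  ultimately obtain \<F> where \<F>: "\<F> \<subseteq> range U" "finite \<F>" "C \<subseteq> \<Union>\<F>"
    using \<open>compact_quotient G \<rho> C\<close> unfolding compact_quotient_def by (metis rangeE)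
  then obtain N where N: "finite N" "\<F> = U ` N"
    using finite_subset_image by metis
  then obtain m where m: "\<forall>n\<in>N. n \<le> m"
    using finite_nat_set_iff_bounded_le by blast
  have "C \<subseteq> U m"
  proof
    fix c assume "c \<in> C"
    then obtain n where "n \<in> N" "c \<in> U n"
      using \<F>(3) N(2) by blast
    then obtain g where "g \<in> carrier G" "dist c (\<rho> g x) < real n"
      unfolding U_def by blast
    moreover have "real n \<le> real m"
      using m \<open>n \<in> N\<close> by simp
    ultimately show "c \<in> U m"
      unfolding U_def using \<open>c \<in> C\<close> by force
  qed
  then show ?thesis
    using that unfolding U_def by blast
qed

lemma properly_discontinuous_orbit_dist_bound:
  fixes \<rho>1 :: "'g \<Rightarrow> 'a::metric_space \<Rightarrow> 'a" and \<rho>2 :: "'g \<Rightarrow> 'b::metric_space \<Rightarrow> 'b"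
  assumes act1: "isometric_action G \<rho>1" and act2: "isometric_action G \<rho>2"
    and "properly_discontinuous G \<rho>1" and "proper_space TYPE('a)"
  obtains M where "\<And>g h. g \<in> carrier G \<Longrightarrow> h \<in> carrier G \<Longrightarrow> dist (\<rho>1 g x1) (\<rho>1 h x1) \<le> R \<Longrightarrow>
      dist (\<rho>2 g x2) (\<rho>2 h x2) \<le> M"
proof -
  interpret group G
    by (rule isometric_actionD(1)[OF act1])
  define K where "K = cball x1 R"
  define S where "S = {k \<in> carrier G. \<rho>1 k ` K \<inter> K \<noteq> {}}"
  have "compact K"
    using \<open>proper_space TYPE('a)\<close> unfolding proper_space_def K_def by blast
  then have "finite S"
    using \<open>properly_discontinuous G \<rho>1\<close> unfolding properly_discontinuous_def S_def by blast
  define M where "M = (\<Sum>k\<in>S. dist x2 (\<rho>2 k x2))"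
  have "dist (\<rho>2 g x2) (\<rho>2 h x2) \<le> M"
    if g: "g \<in> carrier G" and h: "h \<in> carrier G" and close: "dist (\<rho>1 g x1) (\<rho>1 h x1) \<le> R" for g h
  proof -
    define k where "k = inv\<^bsub>G\<^esub> g \<otimes>\<^bsub>G\<^esub> h"
    have k: "k \<in> carrier G" "g \<otimes>\<^bsub>G\<^esub> k = h"
      using g h by (simp_all add: k_def m_assoc[symmetric])
    have translate1: "\<rho>1 h x1 = \<rho>1 g (\<rho>1 k x1)" and translate2: "\<rho>2 h x2 = \<rho>2 g (\<rho>2 k x2)"
      using isometric_actionD(3)[OF act1 g k(1)] isometric_actionD(3)[OF act2 g k(1)] k(2)
      by simp_all
    have "dist x1 (\<rho>1 k x1) \<le> R"
      using close translate1 isometric_actionD(2)[OF act1 g] by simp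
    then have "\<rho>1 k x1 \<in> K" and "x1 \<in> K"
      unfolding K_def mem_cball dist_self using zero_le_dist[of x1 "\<rho>1 k x1"] by linarith+
    then have "k \<in> S"
      unfolding S_def using k(1) by blast
    then show ?thesis
      unfolding M_def translate2 isometric_actionD(2)[OF act2 g]
      using \<open>finite S\<close> by (intro member_le_sum) auto
  qed
  then show ?thesis
    using that by blast
qed

definition uniformly_bounded_fibres :: "('a \<times> 'b::metric_space) set \<Rightarrow> bool" where
  "uniformly_bounded_fibres C \<longleftrightarrow> (\<exists>M. \<forall>y z z'. (y, z) \<in> C \<longrightarrow> (y, z') \<in> C \<longrightarrow> dist z z' \<le> M)"

lemma dist_lt_diagonal_actionD:
  assumes "dist (y, z) (diagonal_action \<rho>1 \<rho>2 g (x1, x2)) < D"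
  shows "dist y (\<rho>1 g x1) < D" and "dist z (\<rho>2 g x2) < D"
  using le_less_trans[OF dist_fst_le assms] le_less_trans[OF dist_snd_le assms]
  by (simp_all add: diagonal_action_def)

lemma orbit_neighbourhood_uniformly_bounded_fibres:
  fixes \<rho>1 :: "'g \<Rightarrow> 'a::metric_space \<Rightarrow> 'a" and \<rho>2 :: "'g \<Rightarrow> 'b::metric_space \<Rightarrow> 'b"
  assumes act1: "isometric_action G \<rho>1" and act2: "isometric_action G \<rho>2"
    and "properly_discontinuous G \<rho>1" and "proper_space TYPE('a)"
    and near: "\<And>c. c \<in> C \<Longrightarrow> \<exists>g\<in>carrier G. dist c (diagonal_action \<rho>1 \<rho>2 g (x1, x2)) < D"
  shows "uniformly_bounded_fibres C"
proof -
  obtain M where M: "\<And>g h. g \<in> carrier G \<Longrightarrow> h \<in> carrier G \<Longrightarrow>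
      dist (\<rho>1 g x1) (\<rho>1 h x1) \<le> 2 * D \<Longrightarrow> dist (\<rho>2 g x2) (\<rho>2 h x2) \<le> M"
    using properly_discontinuous_orbit_dist_bound[OF act1 act2 assms(3,4)] by blast
  have "dist z z' \<le> 2 * D + M" if yz: "(y, z) \<in> C" "(y, z') \<in> C" for y z z'
  proof -
    obtain g h where g: "g \<in> carrier G" "dist (y, z) (diagonal_action \<rho>1 \<rho>2 g (x1, x2)) < D"
      and h: "h \<in> carrier G" "dist (y, z') (diagonal_action \<rho>1 \<rho>2 h (x1, x2)) < D"
      using near[OF yz(1)] near[OF yz(2)] by blast
    have "dist (\<rho>1 g x1) (\<rho>1 h x1) \<le> 2 * D"
      using dist_triangle[of "\<rho>1 g x1" "\<rho>1 h x1" y] dist_lt_diagonal_actionD(1)[OF g(2)]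
        dist_lt_diagonal_actionD(1)[OF h(2)] by (simp add: dist_commute)
    then have "dist (\<rho>2 g x2) (\<rho>2 h x2) \<le> M"
      using M g(1) h(1) by blast
    then show ?thesis
      using dist_triangle[of z z' "\<rho>2 g x2"] dist_triangle[of "\<rho>2 g x2" z' "\<rho>2 h x2"]
        dist_lt_diagonal_actionD(2)[OF g(2)] dist_lt_diagonal_actionD(2)[OF h(2)]
      by (simp add: dist_commute)
  qed
  then show ?thesis
    unfolding uniformly_bounded_fibres_def by blast
qed

lemma dist_swap: "dist (prod.swap p) (prod.swap q) = dist p q"
  by (cases p; cases q) (simp add: dist_Pair_Pair add.commute)

lemma convex_cocompact_diagonal_uniformly_bounded_fibres:
  fixes \<rho>1 :: "'g \<Rightarrow> 'a::metric_space \<Rightarrow> 'a" and \<rho>2 :: "'g \<Rightarrow> 'b::metric_space \<Rightarrow> 'b"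
  assumes "convex_cocompact G \<rho>1" and "convex_cocompact G \<rho>2"
    and "convex_cocompact G (diagonal_action \<rho>1 \<rho>2)"
    and "convex_cocompact_witness G (diagonal_action \<rho>1 \<rho>2) C" and "(x1, x2) \<in> C"
    and "proper_space TYPE('a)" and "proper_space TYPE('b)"
  shows "uniformly_bounded_fibres C" and "uniformly_bounded_fibres (prod.swap ` C)"
proof -
  have act1: "isometric_action G \<rho>1" and pd1: "properly_discontinuous G \<rho>1"
    and act2: "isometric_action G \<rho>2" and pd2: "properly_discontinuous G \<rho>2"
    using assms(1,2) unfolding convex_cocompact_def by blast+
  obtain D where near: "\<And>c. c \<in> C \<Longrightarrow> \<exists>g\<in>carrier G. dist c (diagonal_action \<rho>1 \<rho>2 g (x1, x2)) < D"
    using compact_quotient_orbit_cover[of G "diagonal_action \<rho>1 \<rho>2" C "(x1, x2)"] assms(3-5)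
    unfolding convex_cocompact_def convex_cocompact_witness_def by blast
  show "uniformly_bounded_fibres C"
    by (rule orbit_neighbourhood_uniformly_bounded_fibres[OF act1 act2 pd1 \<open>proper_space TYPE('a)\<close> near])
  have near_swap: "\<exists>g\<in>carrier G. dist c (diagonal_action \<rho>2 \<rho>1 g (x2, x1)) < D"
    if c_swap: "c \<in> prod.swap ` C" for c
  proof -
    obtain c' where "c' \<in> C" and c: "c = prod.swap c'"
      using c_swap by blast
    then obtain g where "g \<in> carrier G" and "dist c' (diagonal_action \<rho>1 \<rho>2 g (x1, x2)) < D"
      using near by blast
    moreover have "diagonal_action \<rho>2 \<rho>1 g (x2, x1) = prod.swap (diagonal_action \<rho>1 \<rho>2 g (x1, x2))"
      by (simp add: diagonal_action_def)
    ultimately show ?thesis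
      unfolding c by (metis dist_swap)
  qed
  show "uniformly_bounded_fibres (prod.swap ` C)"
    by (rule orbit_neighbourhood_uniformly_bounded_fibres[OF act2 act1 pd2 \<open>proper_space TYPE('b)\<close> near_swap])
qed

section \<open>The flat spanned by two geodesic lines\<close>

lemma dist_map_prod_geodesic_lines:
  assumes "geodesic_line l1" and "geodesic_line l2"
  shows "dist (map_prod l1 l2 p) (map_prod l1 l2 q) = dist p q"
  using assms by (cases p; cases q) (simp add: dist_Pair_Pair geodesic_line_def dist_real_def)

lemma convex_vimage_isometric:
  fixes f :: "'v::real_normed_vector \<Rightarrow> 'a::metric_space"
  assumes iso: "\<And>p q. dist (f p) (f q) = dist p q" and "convex_in C"
  shows "convex (f -` C)"
  unfolding convex_alt
proof (intro ballI allI impI)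
  fix p q and t :: real
  assume "p \<in> f -` C" "q \<in> f -` C" "0 \<le> t \<and> t \<le> 1"
  define c where "c s = f ((1 - s) *\<^sub>R p + s *\<^sub>R q)" for s
  have "geodesic_path (f p) (f q) c"
    unfolding geodesic_path_def
  proof (intro conjI ballI)
    fix s s' :: real
    have "(1 - s) *\<^sub>R p + s *\<^sub>R q - ((1 - s') *\<^sub>R p + s' *\<^sub>R q) = (s' - s) *\<^sub>R (p - q)"
      by (simp add: algebra_simps)
    then show "dist (c s) (c s') = \<bar>s - s'\<bar> * dist (f p) (f q)"
      by (simp add: c_def iso dist_norm abs_minus_commute)
  qed (simp_all add: c_def)
  then have "c ` {0..1} \<subseteq> C"
    using \<open>convex_in C\<close> \<open>p \<in> f -` C\<close> \<open>q \<in> f -` C\<close> unfolding convex_in_def by blast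
  then have "c t \<in> C"
    using \<open>0 \<le> t \<and> t \<le> 1\<close> by auto
  then show "(1 - t) *\<^sub>R p + t *\<^sub>R q \<in> f -` C"
    by (simp add: c_def)
qed

lemma closed_vimage_isometric:
  assumes iso: "\<And>p q. dist (f p) (f q) = dist p q" and "closed C"
  shows "closed (f -` C)"
proof (rule closed_vimage[OF \<open>closed C\<close>])
  show "continuous_on UNIV f"
    unfolding continuous_on_iff iso by blast
qed

lemma bounded_image_isometric:
  assumes iso: "\<And>p q. dist (f p) (f q) = dist p q" and "bounded S"
  shows "bounded (f ` S)"
proof -
  obtain x e where "\<forall>y\<in>S. dist x y \<le> e"
    using \<open>bounded S\<close> unfolding bounded_def by blast
  then show ?thesis
    unfolding bounded_def by (auto simp: iso intro!: exI[of _ "f x"] exI[of _ e])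
qed

lemma near_ray_or_line_in_image:
  assumes iso: "\<And>p q. dist (f p) (f q) = dist p q" and "near_ray_or_line_in F S"
  shows "near_ray_or_line_in (f ` F) (f ` S)"
proof -
  have short: "dist (f p) (f q) \<le> dist p q" for p q
    by (simp add: iso)
  from \<open>near_ray_or_line_in F S\<close> consider
      r where "geodesic_ray r" "r ` {0..} \<subseteq> F" "finite_hausdorff_dist S (r ` {0..})"
    | \<gamma> where "geodesic_line \<gamma>" "range \<gamma> \<subseteq> F" "finite_hausdorff_dist S (range \<gamma>)"
    unfolding near_ray_or_line_in_def by blast
  then show ?thesis
  proof cases
    case (1 r)
    have "geodesic_ray (f \<circ> r)"
      using 1(1) by (simp add: geodesic_ray_def iso)
    moreover have "(f \<circ> r) ` {0..} \<subseteq> f ` F"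
      using 1(2) by (metis image_comp image_mono)
    moreover have "finite_hausdorff_dist (f ` S) ((f \<circ> r) ` {0..})"
      unfolding image_comp[symmetric] by (rule finite_hausdorff_dist_image[OF 1(3) short])
    ultimately show ?thesis
      unfolding near_ray_or_line_in_def by blast
  next
    case (2 \<gamma>)
    have "geodesic_line (f \<circ> \<gamma>)"
      using 2(1) by (simp add: geodesic_line_def iso)
    moreover have "range (f \<circ> \<gamma>) \<subseteq> f ` F"
      using 2(2) by (metis image_comp image_mono)
    moreover have "finite_hausdorff_dist (f ` S) (range (f \<circ> \<gamma>))"
      unfolding image_comp[symmetric] by (rule finite_hausdorff_dist_image[OF 2(3) short])
    ultimately show ?thesis
      unfolding near_ray_or_line_in_def by blast
  qed
qed

lemma uniformly_bounded_fibres_flat: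
  assumes "geodesic_line l1" and "geodesic_line l2"
    and "uniformly_bounded_fibres C" and "uniformly_bounded_fibres (prod.swap ` C)"
  obtains M where "\<And>p q i. p \<in> map_prod l1 l2 -` C \<Longrightarrow> q \<in> map_prod l1 l2 -` C \<Longrightarrow> i \<in> Basis \<Longrightarrow>
      p \<bullet> i = q \<bullet> i \<Longrightarrow> dist p q \<le> M"
proof -
  obtain M1 where M1: "\<And>y z z'. (y, z) \<in> C \<Longrightarrow> (y, z') \<in> C \<Longrightarrow> dist z z' \<le> M1"
    using \<open>uniformly_bounded_fibres C\<close> unfolding uniformly_bounded_fibres_def by blast
  obtain M2 where M2: "\<And>y z z'. (z, y) \<in> C \<Longrightarrow> (z', y) \<in> C \<Longrightarrow> dist z z' \<le> M2"
    using \<open>uniformly_bounded_fibres (prod.swap ` C)\<close>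
    unfolding uniformly_bounded_fibres_def by (metis image_eqI swap_simp)
  have "dist p q \<le> max M1 M2"
    if pq_in: "p \<in> map_prod l1 l2 -` C" "q \<in> map_prod l1 l2 -` C"
      and "i \<in> Basis" "p \<bullet> i = q \<bullet> i" for p q i
  proof -
    obtain a b a' b' where pq: "p = (a, b)" "q = (a', b')"
      by fastforce
    have "i = (1, 0) \<or> i = (0, 1)"
      using \<open>i \<in> Basis\<close> by (auto simp: Basis_prod_def)
    then consider "a = a'" | "b = b'"
      using \<open>p \<bullet> i = q \<bullet> i\<close> pq by auto
    then show ?thesis
    proof cases
      case 1
      then have "dist (l2 b) (l2 b') \<le> M1"
        using M1 pq_in pq by simp
      then show ?thesis
        using \<open>geodesic_line l2\<close> 1 pq by (simp add: geodesic_line_def dist_Pair_Pair dist_real_def)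
    next
      case 2
      then have "dist (l1 a) (l1 a') \<le> M2"
        using M2 pq_in pq by simp
      then show ?thesis
        using \<open>geodesic_line l1\<close> 2 pq by (simp add: geodesic_line_def dist_Pair_Pair dist_real_def)
    qed
  qed
  then show ?thesis
    using that by blast
qed

theorem lemma3p1:
  fixes G :: "('g, 'm) monoid_scheme"
    and \<rho>1 :: "'g \<Rightarrow> 'a::metric_space \<Rightarrow> 'a"
    and \<rho>2 :: "'g \<Rightarrow> 'b::metric_space \<Rightarrow> 'b"
    and C :: "('a \<times> 'b) set"
    and x1 :: 'a and x2 :: 'b
    and l1 :: "real \<Rightarrow> 'a" and l2 :: "real \<Rightarrow> 'b"
  assumes "proper_space TYPE('a)" and "CAT0 TYPE('a)"
    and "proper_space TYPE('b)" and "CAT0 TYPE('b)"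
    and "group G" and "infinite (carrier G)"
    and "convex_cocompact G \<rho>1" and "convex_cocompact G \<rho>2"
    and "convex_cocompact G (diagonal_action \<rho>1 \<rho>2)"
    and "convex_cocompact_witness G (diagonal_action \<rho>1 \<rho>2) C"
    and "(x1, x2) \<in> C"
    and "geodesic_line l1" and "x1 \<in> range l1"
    and "geodesic_line l2" and "x2 \<in> range l2"
    and "\<not> bounded ((range l1 \<times> range l2) \<inter> C)"
  shows "(\<exists>r. geodesic_ray r \<and> r ` {0..} \<subseteq> range l1 \<times> range l2 \<and>
            finite_hausdorff_dist ((range l1 \<times> range l2) \<inter> C) (r ` {0..}))
       \<or> (\<exists>\<gamma>. geodesic_line \<gamma> \<and> range \<gamma> \<subseteq> range l1 \<times> range l2 \<and>
            finite_hausdorff_dist ((range l1 \<times> range l2) \<inter> C) (range \<gamma>))"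
proof -
  let ?f = "map_prod l1 l2"
  have iso: "\<And>p q. dist (?f p) (?f q) = dist p q"
    using dist_map_prod_geodesic_lines[OF assms(12,14)] .
  have flat: "range ?f = range l1 \<times> range l2"
    using map_prod_surj_on[of l1 UNIV _ l2 UNIV] by simp
  have C_F: "(range l1 \<times> range l2) \<inter> C = ?f ` (?f -` C)"
    by (simp add: flat image_vimage_eq Int_commute)
  have "closed (?f -` C)" and "convex (?f -` C)"
    using closed_vimage_isometric[OF iso] convex_vimage_isometric[OF iso] assms(10)
    unfolding convex_cocompact_witness_def by blast+
  moreover have "\<not> bounded (?f -` C)"
    using bounded_image_isometric[OF iso] assms(16) C_F by metis
  moreover obtain M where "\<And>p q i. p \<in> ?f -` C \<Longrightarrow> q \<in> ?f -` C \<Longrightarrow> i \<in> Basis \<Longrightarrow>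
      p \<bullet> i = q \<bullet> i \<Longrightarrow> dist p q \<le> M"
    using uniformly_bounded_fibres_flat[OF assms(12,14)]
      convex_cocompact_diagonal_uniformly_bounded_fibres[OF assms(7-11,1,3)] by metis
  ultimately have "near_ray_or_line_in UNIV (?f -` C)"
    by (rule closed_convex_unbounded_near_ray_or_line)
  then have "near_ray_or_line_in (range ?f) (?f ` (?f -` C))"
    by (rule near_ray_or_line_in_image[OF iso])
  then show ?thesis
    unfolding near_ray_or_line_in_def C_F[symmetric] flat .
qed

end
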